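(* A $*$-ring $R$ is a generalized Rickart $*$-ring if and only if $R$ has a unity element and for each $x\in R$ there exist a projection $e\in R$ and $n\in\mathbb N$ such that $r(x^n)=r(e)$.
   Context: A $*$-ring is an associative ring $R$ with an involution $x\mapsto x^*$ (additive, $(xy)^*=y^*x^*$, $x^{**}=x$). A projection is an element $e$ with $e=e^*=e^2$. For $a\in R$, $r(a)=\{b\in R: ab=0\}$. $R$ is a generalized Rickart $*$-ring if for every $x\in R$ there exist a positive integer $n$ and a projection $g$ with $r(x^n)=gR$. *)

theory Defs
  imports Main
begin

definition is_involution :: "('a::ring \<Rightarrow> 'a) \<Rightarrow> bool" where
  "is_involution s \<longleftrightarrow>
     (\<forall>x y. s (x + y) = s x + s y) \<and>
     (\<forall>x y. s (x * y) = s y * s x) \<and>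
     (\<forall>x. s (s x) = x)"

definition is_projection :: "('a::ring \<Rightarrow> 'a) \<Rightarrow> 'a \<Rightarrow> bool" where
  "is_projection s e \<longleftrightarrow> e = s e \<and> e = e * e"

definition rann :: "'a::ring \<Rightarrow> 'a set" where
  "rann a = {b. a * b = 0}"

definition rideal :: "'a::ring \<Rightarrow> 'a set" where
  "rideal g = {g * y | y. True}"

text \<open>Positive powers in a possibly non-unital ring: rpow x n = x^n for n \<ge> 1
  (the value at n = 0 is an arbitrary convention and never used).\<close>
fun rpow :: "'a::ring \<Rightarrow> nat \<Rightarrow> 'a" where
  "rpow x 0 = 0"
| "rpow x (Suc 0) = x"
| "rpow x (Suc (Suc n)) = x * rpow x (Suc n)"

definition has_unity :: "'a::ring itself \<Rightarrow> bool" where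
  "has_unity _ \<longleftrightarrow> (\<exists>u::'a. \<forall>x. u * x = x \<and> x * u = x)"

definition generalized_rickart :: "('a::ring \<Rightarrow> 'a) \<Rightarrow> bool" where
  "generalized_rickart s \<longleftrightarrow>
     (\<forall>x. \<exists>n>0. \<exists>g. is_projection s g \<and> rann (rpow x n) = rideal g)"

end

theory Submission
  imports Defs
begin

text \<open>Since 0^n = 0, the generalized Rickart condition for x = 0 says that R = gR for a
  projection g; a self-adjoint left identity is a two-sided identity, so R is unital. In a
  unital *-ring the right ideals of the form gR with g a projection are exactly the right
  annihilators r(e) of projections, because r(e) = (1 - e)R and 1 - e is again a projection.\<close>

lemma rpow_0_left: "n > 0 \<Longrightarrow> rpow (0::'a::ring) n = 0"
  by (cases "(0::'a, n)" rule: rpow.cases) auto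

lemma involution_diff: "is_involution s \<Longrightarrow> s ((a::'a::ring) - b) = s a - s b"
  unfolding is_involution_def by (metis add_diff_cancel diff_add_cancel)

lemma involution_fixes_right_unity:
  fixes u :: "'a::ring"
  assumes inv: "is_involution s" and right: "\<And>x. x * u = x"
  shows "s u = u"
proof -
  have "u = s (s u * u)" using inv right unfolding is_involution_def by simp
  also have "\<dots> = s u * s (s u)" using inv unfolding is_involution_def by blast
  also have "\<dots> = s u" using inv right unfolding is_involution_def by simp
  finally show ?thesis by simp
qed

lemma self_adjoint_left_unity_is_right_unity:
  fixes g :: "'a::ring"
  assumes inv: "is_involution s" and "s g = g" and left: "\<And>x. g * x = x"
  shows "y * g = y"
proof -
  have "y * g = s (s y) * s g" using inv \<open>s g = g\<close> unfolding is_involution_def by simp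
  also have "\<dots> = s (g * s y)" using inv unfolding is_involution_def by simp
  also have "\<dots> = y" using inv left unfolding is_involution_def by simp
  finally show ?thesis .
qed

lemma projection_complement:
  fixes u e :: "'a::ring"
  assumes inv: "is_involution s" and left: "\<And>x. u * x = x" and right: "\<And>x. x * u = x"
    and e: "is_projection s e"
  shows "is_projection s (u - e)"
proof -
  have "e * e = e" "s e = e" using e unfolding is_projection_def by auto
  moreover have "s u = u" using involution_fixes_right_unity[OF inv right] .
  ultimately show ?thesis
    unfolding is_projection_def
    by (simp add: involution_diff[OF inv] left_diff_distrib right_diff_distrib left right)
qed

lemma rann_projection:
  fixes u e :: "'a::ring"
  assumes left: "\<And>x. u * x = x" and right: "\<And>x. x * u = x" and e: "is_projection s e"
  shows "rann e = rideal (u - e)"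
proof (intro set_eqI iffI)
  have ee: "e * e = e" using e unfolding is_projection_def by simp
  fix b
  show "b \<in> rideal (u - e)" if "b \<in> rann e"
  proof -
    have "b = (u - e) * b" using that unfolding rann_def by (simp add: left_diff_distrib left)
    then show ?thesis unfolding rideal_def by blast
  qed
  show "b \<in> rideal (u - e) \<Longrightarrow> b \<in> rann e"
    unfolding rann_def rideal_def
    by (auto simp: right_diff_distrib right ee mult.assoc[symmetric])
qed

lemma projection_rideal_iff_rann:
  fixes u :: "'a::ring" and A :: "'a set"
  assumes inv: "is_involution s" and left: "\<And>x. u * x = x" and right: "\<And>x. x * u = x"
  shows "(\<exists>g. is_projection s g \<and> A = rideal g) \<longleftrightarrow> (\<exists>e. is_projection s e \<and> A = rann e)"
proof
  assume "\<exists>g. is_projection s g \<and> A = rideal g"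
  then obtain g where g: "is_projection s g" and "A = rideal g" by blast
  then have "A = rann (u - g)"
    using rann_projection[OF left right projection_complement[OF inv left right g]] by simp
  then show "\<exists>e. is_projection s e \<and> A = rann e"
    using projection_complement[OF inv left right g] by blast
next
  assume "\<exists>e. is_projection s e \<and> A = rann e"
  then show "\<exists>g. is_projection s g \<and> A = rideal g"
    using rann_projection[OF left right] projection_complement[OF inv left right] by blast
qed

lemma generalized_rickart_has_unity:
  assumes inv: "is_involution (s :: 'a::ring \<Rightarrow> 'a)" and "generalized_rickart s"
  shows "has_unity TYPE('a)"
proof -
  obtain n g where "n > 0" and g: "is_projection s g" and "rann (rpow (0::'a) n) = rideal g"
    using \<open>generalized_rickart s\<close> unfolding generalized_rickart_def by blast
  then have "rideal g = UNIV" by (simp add: rann_def rpow_0_left)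
  have left: "g * x = x" for x
  proof -
    obtain y where "x = g * y" using \<open>rideal g = UNIV\<close> unfolding rideal_def by blast
    with g show ?thesis unfolding is_projection_def by (metis mult.assoc)
  qed
  moreover have "s g = g" using g unfolding is_projection_def by simp
  ultimately show ?thesis
    unfolding has_unity_def using self_adjoint_left_unity_is_right_unity[OF inv] by blast
qed

theorem mainTheorem7:
  fixes s :: "'a::ring \<Rightarrow> 'a"
  assumes "is_involution s"
  shows "generalized_rickart s \<longleftrightarrow>
    (has_unity TYPE('a) \<and>
     (\<forall>x::'a. \<exists>e n. is_projection s e \<and> n > 0 \<and> rann (rpow x n) = rann e))"
proof (cases "has_unity TYPE('a)")
  case True
  then obtain u :: 'a where left: "\<And>x. u * x = x" and right: "\<And>x. x * u = x"
    unfolding has_unity_def by blast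
  show ?thesis
    unfolding generalized_rickart_def
    using projection_rideal_iff_rann[OF assms left right] True by metis
next
  case False
  then show ?thesis using generalized_rickart_has_unity[OF assms] by blast
qed

end
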